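(* Suppose $n$ is even. Let $\ell$ be the smallest integer $\ge0$ such that $a_{\ell+1}\neq0$, and let $\lambda:=[\ell/2]$. Then the $n/2$ functions $J_1,\dots,J_\lambda,\ H,\ F_{\lambda+1},F_{\lambda+2},\dots,F_{n/2-1}$ are pairwise in involution with respect to $\{\cdot,\cdot\}$ and functionally independent (their differentials are linearly independent on a dense open subset of $\mathbb R^n$). Hence they define a Liouville integrable system on $(\mathbb R^n,\{\cdot,\cdot\})$.
   Context: Let $n\ge1$, $(a_1,\dots,a_n)\in\mathbb R^n\setminus\{0\}$. On $\mathbb R^n$ with coordinates $x_1,\dots,x_n$ consider the Poisson bracket $\{x_i,x_j\}=x_ix_j$ for $1\le i<j\le n$ (extended by skew-symmetry and the Leibniz rule; rational functions are considered on the open dense set where their denominators do not vanish); for $n$ even it has rank $n$. Let $H=a_1x_1+\dots+a_nx_n$, $v_0:=0$ and $v_i:=a_1x_1+\dots+a_ix_i$ for $i=1,\dots,n$. For $k=1,\dots,[n/2]$ let $J_k:=\dfrac{x_1x_3\cdots x_{2k-1}}{x_2x_4\cdots x_{2k}}$. For $n$ even and $k=1,\dots,n/2$ let $F_k:=v_{2k}\dfrac{x_{2k+2}x_{2k+4}\cdots x_n}{x_{2k+1}x_{2k+3}\cdots x_{n-1}}$ (empty product $=1$, so $F_{n/2}=H$). *)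

theory Defs
  imports "HOL-Analysis.Analysis"
begin

text \<open>Points of R^n are represented as functions x :: nat => real; the coordinates
  are x 1, ..., x n and all other values are 0 (set Rn n).  R^n carries the subspace
  topology of the product topology on nat => real, which is the Euclidean topology.\<close>

definition Rn :: "nat \<Rightarrow> (nat \<Rightarrow> real) set" where
  "Rn n = {x. \<forall>i. i \<notin> {1..n} \<longrightarrow> x i = 0}"

definition pd :: "((nat \<Rightarrow> real) \<Rightarrow> real) \<Rightarrow> nat \<Rightarrow> (nat \<Rightarrow> real) \<Rightarrow> real" where
  "pd f i x = deriv (\<lambda>t. f (x(i := t))) (x i)"

definition pi_mat :: "nat \<Rightarrow> nat \<Rightarrow> (nat \<Rightarrow> real) \<Rightarrow> real" where
  "pi_mat i j x = (if i < j then x i * x j else if j < i then - (x i * x j) else 0)"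

definition pbracket :: "nat \<Rightarrow> ((nat \<Rightarrow> real) \<Rightarrow> real) \<Rightarrow> ((nat \<Rightarrow> real) \<Rightarrow> real)
    \<Rightarrow> (nat \<Rightarrow> real) \<Rightarrow> real" where
  "pbracket n f g x = (\<Sum>i\<in>{1..n}. \<Sum>j\<in>{1..n}. pi_mat i j x * pd f i x * pd g j x)"

definition vv :: "(nat \<Rightarrow> real) \<Rightarrow> nat \<Rightarrow> (nat \<Rightarrow> real) \<Rightarrow> real" where
  "vv a i x = (\<Sum>j\<in>{1..i}. a j * x j)"

definition HH :: "(nat \<Rightarrow> real) \<Rightarrow> nat \<Rightarrow> (nat \<Rightarrow> real) \<Rightarrow> real" where
  "HH a n x = vv a n x"

definition JJ :: "nat \<Rightarrow> (nat \<Rightarrow> real) \<Rightarrow> real" where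
  "JJ k x = (\<Prod>j\<in>{1..k}. x (2*j - 1)) / (\<Prod>j\<in>{1..k}. x (2*j))"

definition FF :: "(nat \<Rightarrow> real) \<Rightarrow> nat \<Rightarrow> nat \<Rightarrow> (nat \<Rightarrow> real) \<Rightarrow> real" where
  "FF a n k x = vv a (2*k) x * (\<Prod>j\<in>{k+1..n div 2}. x (2*j)) / (\<Prod>j\<in>{k+1..n div 2}. x (2*j - 1))"

definition ell :: "(nat \<Rightarrow> real) \<Rightarrow> nat" where
  "ell a = (LEAST l. a (l + 1) \<noteq> 0)"

definition fam :: "(nat \<Rightarrow> real) \<Rightarrow> nat \<Rightarrow> nat \<Rightarrow> (nat \<Rightarrow> real) \<Rightarrow> real" where
  "fam a n k = (let lam = ell a div 2 in
     if k \<le> lam then JJ k else if k = lam + 1 then HH a n else FF a n (k - 1))"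

end

theory Submission
  imports Defs
begin

text \<open>Where all coordinates are nonzero, \<open>{f, g} = \<Sum>i j. sgn (j - i) (x_i \<partial>_i f) (x_j \<partial>_j g)\<close>:
  a constant skew form evaluated on logarithmic gradients. The logarithmic gradient of \<open>J_k\<close> is
  \<open>J_k\<close> times the alternating vector \<open>(-1)^(i+1)\<close>, \<open>i \<le> 2k\<close>; that of \<open>F_m\<close> is a multiple of the
  vector \<open>a_i x_i\<close> for \<open>i \<le> 2m\<close> continued by \<open>v_2m (-1)^i\<close>. Against an alternating tail the skew
  form reduces to a partial sum, so all pairings vanish; \<open>J_k\<close> against \<open>F_m\<close> uses \<open>a_i = 0\<close> for
  \<open>i \<le> \<ell>\<close>. Independence is triangular: the coordinates \<open>2r \<le> 2\<lambda>\<close> see only the \<open>J\<close>'s,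
  coordinate \<open>\<ell> + 1\<close> forces the \<open>F\<close>-coefficients to sum to zero, and coordinate \<open>2m + 1\<close> then
  isolates the \<open>m\<close>-th of them with the factor \<open>v_(2m+1)\<close>. So the differentials are independent
  wherever all \<open>x_i\<close> and all \<open>v_j\<close>, \<open>j > \<ell>\<close>, are nonzero, which is an open dense set.\<close>

section \<open>The sign form\<close>

definition cmp_sign :: "nat \<Rightarrow> nat \<Rightarrow> real" where
  "cmp_sign i j = (if i < j then 1 else if j < i then -1 else 0)"

definition sign_form :: "nat \<Rightarrow> (nat \<Rightarrow> real) \<Rightarrow> (nat \<Rightarrow> real) \<Rightarrow> real" where
  "sign_form n w u = (\<Sum>i\<in>{1..n}. \<Sum>j\<in>{1..n}. cmp_sign i j * w i * u j)"

lemma sign_form_swap: "sign_form n u w = - sign_form n w u"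
proof -
  have "sign_form n u w = (\<Sum>j\<in>{1..n}. \<Sum>i\<in>{1..n}. cmp_sign j i * u j * w i)"
    by (simp add: sign_form_def)
  also have "\<dots> = (\<Sum>i\<in>{1..n}. \<Sum>j\<in>{1..n}. - (cmp_sign i j * w i * u j))"
    by (subst sum.swap) (intro sum.cong refl, simp add: cmp_sign_def)
  finally show ?thesis
    by (simp add: sign_form_def sum_negf)
qed

lemma sign_form_self: "sign_form n w w = 0"
  using sign_form_swap[of n w w] by simp

lemma sign_form_cong:
  "(\<And>i. i \<in> {1..n} \<Longrightarrow> w i = w' i) \<Longrightarrow> (\<And>i. i \<in> {1..n} \<Longrightarrow> u i = u' i)
   \<Longrightarrow> sign_form n w u = sign_form n w' u'"
  unfolding sign_form_def by (intro sum.cong refl) auto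

lemma sign_form_add_left: "sign_form n (\<lambda>i. w i + w' i) u = sign_form n w u + sign_form n w' u"
  by (simp add: sign_form_def algebra_simps sum.distrib)

lemma sign_form_diff_left: "sign_form n (\<lambda>i. w i - w' i) u = sign_form n w u - sign_form n w' u"
  by (simp add: sign_form_def algebra_simps sum_subtractf)

lemma sign_form_scale_left: "sign_form n (\<lambda>i. c * w i) u = c * sign_form n w u"
  by (simp add: sign_form_def sum_distrib_left mult_ac)

lemma sign_form_add_right: "sign_form n u (\<lambda>i. w i + w' i) = sign_form n u w + sign_form n u w'"
  by (simp add: sign_form_def algebra_simps sum.distrib)

lemma sign_form_diff_right: "sign_form n u (\<lambda>i. w i - w' i) = sign_form n u w - sign_form n u w'"
  by (simp add: sign_form_def algebra_simps sum_subtractf)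

lemma sign_form_scale_right: "sign_form n u (\<lambda>i. c * w i) = c * sign_form n u w"
  by (simp add: sign_form_def sum_distrib_left mult_ac)

lemma sign_form_separated:
  assumes "\<And>i j. w i \<noteq> 0 \<Longrightarrow> u j \<noteq> 0 \<Longrightarrow> i < j"
  shows "sign_form n w u = (\<Sum>i\<in>{1..n}. w i) * (\<Sum>j\<in>{1..n}. u j)"
  unfolding sign_form_def sum_product
  by (intro sum.cong refl) (use assms in \<open>fastforce simp: cmp_sign_def\<close>)

lemma sum_cmp_sign:
  assumes "i \<in> {1..n}"
  shows "(\<Sum>j\<in>{1..n}. cmp_sign i j * u j) = (\<Sum>j\<in>{i<..n}. u j) - (\<Sum>j\<in>{1..<i}. u j)"
proof -
  have "{1..n} = insert i ({1..<i} \<union> {i<..n})" using assms by auto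
  then have "(\<Sum>j\<in>{1..n}. cmp_sign i j * u j)
      = (\<Sum>j\<in>{1..<i}. cmp_sign i j * u j) + (\<Sum>j\<in>{i<..n}. cmp_sign i j * u j)"
    by (simp add: sum.union_disjoint cmp_sign_def disjoint_iff)
  also have "\<dots> = (\<Sum>j\<in>{i<..n}. u j) - (\<Sum>j\<in>{1..<i}. u j)"
    by (simp add: cmp_sign_def sum_negf)
  finally show ?thesis .
qed

lemma sum_alternating:
  "(\<Sum>j\<in>{a..<a+d}. (-1::real) ^ j) = (if even d then 0 else (-1) ^ a)"
  by (induction d) (auto simp: power_add)

definition alt_tail :: "nat \<Rightarrow> nat \<Rightarrow> real" where
  "alt_tail m i = (if 2 * m < i then (-1) ^ i else 0)"

lemma sum_alt_tail_greaterThan: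
  assumes "even n" "c \<le> n"
  shows "(\<Sum>j\<in>{c<..n}. alt_tail m j) = (if 2 * m \<le> c \<and> odd c then 1 else 0)"
proof (cases "2 * m \<le> n")
  case True
  define d where "d = max c (2 * m)"
  have "(\<Sum>j\<in>{c<..n}. alt_tail m j) = (\<Sum>j\<in>{Suc d..<Suc d + (n - d)}. (-1) ^ j)"
    using True assms by (intro sum.mono_neutral_cong_right) (auto simp: alt_tail_def d_def)
  also have "\<dots> = (if 2 * m \<le> c \<and> odd c then 1 else 0)"
    unfolding sum_alternating using True assms by (auto simp: d_def max_def)
  finally show ?thesis .
next
  case False
  then show ?thesis
    using assms by (auto simp: alt_tail_def intro!: sum.neutral)
qed

lemma sum_alt_tail: "even n \<Longrightarrow> (\<Sum>j\<in>{1..n}. alt_tail m j) = 0"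
  using sum_alt_tail_greaterThan[of n 0 m] by (simp add: atLeastSucAtMost_greaterThanAtMost)

lemma sum_cmp_sign_alt_tail:
  assumes "even n" "i \<in> {1..n}"
  shows "(\<Sum>j\<in>{1..n}. cmp_sign i j * alt_tail m j) = (if 2 * m < i then 1 else 0)"
proof -
  have tail: "(\<Sum>j\<in>{i<..n}. alt_tail m j) = (if 2 * m \<le> i \<and> odd i then 1 else 0)"
    using assms by (intro sum_alt_tail_greaterThan) auto
  have "{1..n} = {1..<i} \<union> insert i {i<..n}" using assms(2) by auto
  then have head: "(\<Sum>j\<in>{1..<i}. alt_tail m j) = - alt_tail m i - (\<Sum>j\<in>{i<..n}. alt_tail m j)"
    using sum_alt_tail[OF assms(1), of m] by (simp add: sum.union_disjoint disjoint_iff)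
  show ?thesis
    unfolding sum_cmp_sign[OF assms(2)] head tail by (auto simp: alt_tail_def)
qed

lemma sign_form_alt_tail:
  assumes "even n"
  shows "sign_form n w (alt_tail m) = (\<Sum>i\<in>{2 * m<..n}. w i)"
proof -
  have "sign_form n w (alt_tail m) = (\<Sum>i\<in>{1..n}. w i * (\<Sum>j\<in>{1..n}. cmp_sign i j * alt_tail m j))"
    by (simp add: sign_form_def sum_distrib_left mult_ac)
  also have "\<dots> = (\<Sum>i\<in>{1..n}. if 2 * m < i then w i else 0)"
    by (intro sum.cong refl) (subst sum_cmp_sign_alt_tail[OF assms]; simp)
  also have "\<dots> = (\<Sum>i\<in>{2 * m<..n}. w i)"
    by (intro sum.mono_neutral_cong_right) auto
  finally show ?thesis .
qed

lemma sign_form_alt_tail_alt_tail: "even n \<Longrightarrow> sign_form n (alt_tail k) (alt_tail m) = 0"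
  using sum_alt_tail_greaterThan[of n "2 * m" k] by (cases "2 * m \<le> n") (auto simp: sign_form_alt_tail)

section \<open>The vectors of the family\<close>

lemma vv_split:
  assumes "q \<le> p"
  shows "vv a p x = vv a q x + (\<Sum>i\<in>{q<..p}. a i * x i)"
proof -
  from assms have "{1..p} = {1..q} \<union> {q<..p}" by auto
  then show ?thesis by (simp add: vv_def sum.union_disjoint disjoint_iff)
qed

lemma vv_0 [simp]: "vv a 0 x = 0"
  by (simp add: vv_def)

definition weights :: "(nat \<Rightarrow> real) \<Rightarrow> (nat \<Rightarrow> real) \<Rightarrow> nat \<Rightarrow> nat \<Rightarrow> real" where
  "weights a x p i = (if i \<le> p then a i * x i else 0)"

lemma sum_weights_greaterThan:
  assumes "p \<le> n"
  shows "(\<Sum>i\<in>{q<..n}. weights a x p i) = vv a p x - vv a (min q p) x"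
proof -
  have "(\<Sum>i\<in>{q<..n}. weights a x p i) = (\<Sum>i\<in>{min q p<..p}. a i * x i)"
    using assms by (intro sum.mono_neutral_cong_right) (auto simp: weights_def)
  then show ?thesis
    using vv_split[of "min q p" p a x] by simp
qed

lemma sum_weights: "p \<le> n \<Longrightarrow> (\<Sum>i\<in>{1..n}. weights a x p i) = vv a p x"
  using sum_weights_greaterThan[of p n a x 0] by (simp add: atLeastSucAtMost_greaterThanAtMost)

lemma sign_form_weights:
  assumes "q \<le> p" "p \<le> n"
  shows "sign_form n (weights a x p) (weights a x q) = (vv a q x - vv a p x) * vv a q x"
proof -
  have "sign_form n (weights a x q) (\<lambda>i. weights a x p i - weights a x q i)
      = (\<Sum>i\<in>{1..n}. weights a x q i) * (\<Sum>i\<in>{1..n}. weights a x p i - weights a x q i)"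
    using assms(1) by (intro sign_form_separated) (auto simp: weights_def split: if_splits)
  also have "\<dots> = vv a q x * (vv a p x - vv a q x)"
    using assms sum_weights[of p n a x] sum_weights[of q n a x] by (simp add: sum_subtractf)
  finally show ?thesis
    using sign_form_diff_right[of n "weights a x q" "weights a x p" "weights a x q"]
      sign_form_swap[of n "weights a x p" "weights a x q"]
    by (simp add: sign_form_self algebra_simps)
qed

definition F_vec :: "(nat \<Rightarrow> real) \<Rightarrow> (nat \<Rightarrow> real) \<Rightarrow> nat \<Rightarrow> nat \<Rightarrow> real" where
  "F_vec a x m i = weights a x (2 * m) i + vv a (2 * m) x * alt_tail m i"

lemma sign_form_F_vec:
  assumes "even n" "m \<le> p" "2 * p \<le> n"
  shows "sign_form n (F_vec a x m) (F_vec a x p) = 0"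
proof -
  let ?Lm = "weights a x (2 * m)" and ?Lp = "weights a x (2 * p)"
  let ?vm = "vv a (2 * m) x" and ?vp = "vv a (2 * p) x"
  have LL: "sign_form n ?Lm ?Lp = - ((?vm - ?vp) * ?vm)"
    using sign_form_weights[of "2 * m" "2 * p" n a x] sign_form_swap[of n ?Lm ?Lp] assms by simp
  have Lb: "sign_form n ?Lm (alt_tail p) = 0"
    using assms sum_weights_greaterThan[of "2 * m" n a x "2 * p"] by (simp add: sign_form_alt_tail)
  have bL: "sign_form n (alt_tail m) ?Lp = - (?vp - ?vm)"
    using assms sum_weights_greaterThan[of "2 * p" n a x "2 * m"] sign_form_swap[of n "alt_tail m" ?Lp]
    by (simp add: sign_form_alt_tail)
  have "sign_form n (F_vec a x m) (F_vec a x p)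
      = sign_form n ?Lm ?Lp + ?vp * sign_form n ?Lm (alt_tail p)
        + ?vm * sign_form n (alt_tail m) ?Lp + ?vm * ?vp * sign_form n (alt_tail m) (alt_tail p)"
    unfolding F_vec_def sign_form_add_left sign_form_add_right sign_form_scale_left sign_form_scale_right
    by (simp add: algebra_simps)
  also have "\<dots> = 0"
    unfolding LL Lb bL sign_form_alt_tail_alt_tail[OF assms(1)] by algebra
  finally show ?thesis .
qed

lemma sign_form_alt_head_F_vec:
  assumes "even n" "k \<le> p" "2 * p \<le> n" "\<And>i. i \<in> {1..2 * k} \<Longrightarrow> a i = 0"
  shows "sign_form n (\<lambda>i. alt_tail k i - alt_tail 0 i) (F_vec a x p) = 0"
proof -
  let ?Lp = "weights a x (2 * p)"
  have "vv a (2 * k) x = 0"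
    using assms(4) by (simp add: vv_def)
  then have "sign_form n ?Lp (\<lambda>i. alt_tail k i - alt_tail 0 i) = 0"
    using assms sum_weights_greaterThan[of "2 * p" n a x "2 * k"] sum_weights_greaterThan[of "2 * p" n a x 0]
    by (simp add: sign_form_diff_right sign_form_alt_tail)
  then show ?thesis
    using assms(1) sign_form_swap[of n ?Lp "\<lambda>i. alt_tail k i - alt_tail 0 i"]
    unfolding F_vec_def by (simp add: sign_form_add_right sign_form_scale_right sign_form_diff_left
        sign_form_alt_tail_alt_tail)
qed

lemma sign_form_alt_head_alt_head:
  "even n \<Longrightarrow> sign_form n (\<lambda>i. alt_tail k i - alt_tail 0 i) (\<lambda>i. alt_tail m i - alt_tail 0 i) = 0"
  by (simp add: sign_form_diff_left sign_form_diff_right sign_form_alt_tail_alt_tail)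

lemma eq_0_if_tail_sums_eq_0:
  fixes z :: "nat \<Rightarrow> real"
  assumes "\<And>r. r \<in> {p..q} \<Longrightarrow> (\<Sum>k\<in>{r..q}. z k) = 0" and "k \<in> {p..q}"
  shows "z k = 0"
proof -
  have "(\<Sum>j\<in>{Suc k..q}. z j) = 0"
    using assms by (cases "Suc k \<le> q") auto
  moreover have "{k..q} = insert k {Suc k..q}"
    using assms(2) by auto
  ultimately show ?thesis
    using assms by fastforce
qed

lemma F_vec_independent:
  assumes "even n" "e < n" "a (e + 1) \<noteq> 0" "x (e + 1) \<noteq> 0"
    and vv_nonzero: "\<And>j. j \<in> {e<..n} \<Longrightarrow> vv a j x \<noteq> 0"
    and comb: "\<And>i. i \<in> {1..n} \<Longrightarrow> (\<Sum>m\<in>{e div 2 + 1..n div 2}. y m * F_vec a x m i) = 0"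
    and m: "m \<in> {e div 2 + 1..n div 2}"
  shows "y m = 0"
  using m
  \<comment> \<open>Coordinate \<open>e + 1\<close> makes the remaining \<open>y\<close>'s sum to zero, after which
    coordinate \<open>2 * m + 1\<close> reduces the combination to \<open>- y m * vv a (2 * m + 1) x\<close>.\<close>
proof (induction m rule: less_induct)
  case (less m)
  let ?N = "n div 2"
  have comb_from_m: "(\<Sum>k\<in>{m..?N}. y k * F_vec a x k i) = 0" if "i \<in> {1..n}" for i
  proof -
    have "{e div 2 + 1..?N} = {e div 2 + 1..<m} \<union> {m..?N}"
      using less.prems by auto
    moreover have "(\<Sum>k\<in>{e div 2 + 1..<m}. y k * F_vec a x k i) = 0"
      using less.IH less.prems by (intro sum.neutral) auto
    ultimately show ?thesis
      using comb[OF that] by (simp add: sum.union_disjoint disjoint_iff)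
  qed
  have "(\<Sum>k\<in>{m..?N}. y k * F_vec a x k (e + 1)) = (\<Sum>k\<in>{m..?N}. a (e + 1) * x (e + 1) * y k)"
    using less.prems by (intro sum.cong refl) (auto simp: F_vec_def weights_def alt_tail_def)
  then have sum_y: "(\<Sum>k\<in>{m..?N}. y k) = 0"
    using comb_from_m[of "e + 1"] assms(2-4) by (simp add: sum_distrib_left[symmetric])
  show ?case
  proof (cases "m = ?N")
    case True
    then show ?thesis using sum_y by simp
  next
    case False
    let ?i = "2 * m + 1"
    have i: "?i \<in> {1..n}"
      using False less.prems assms(1) by auto
    have split: "{m..?N} = insert m {m + 1..?N}"
      using less.prems by auto
    have "(\<Sum>k\<in>{m..?N}. y k * F_vec a x k ?i)
        = - y m * vv a (2 * m) x + a ?i * x ?i * (\<Sum>k\<in>{m + 1..?N}. y k)"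
      unfolding split by (simp add: sum_distrib_left F_vec_def weights_def alt_tail_def mult_ac)
    also have "(\<Sum>k\<in>{m + 1..?N}. y k) = - y m"
      using sum_y unfolding split by simp
    also have "- y m * vv a (2 * m) x + a ?i * x ?i * - y m = - y m * vv a ?i x"
      by (simp add: vv_def algebra_simps)
    finally have "y m * vv a ?i x = 0"
      using comb_from_m[OF i] by simp
    moreover have "vv a ?i x \<noteq> 0"
      using vv_nonzero False less.prems assms(1) by auto
    ultimately show ?thesis by simp
  qed
qed

section \<open>Logarithmic gradients\<close>

definition log_grad :: "((nat \<Rightarrow> real) \<Rightarrow> real) \<Rightarrow> (nat \<Rightarrow> real) \<Rightarrow> nat \<Rightarrow> real" where
  "log_grad f x i = x i * pd f i x"

lemma pbracket_eq_sign_form: "pbracket n f g x = sign_form n (log_grad f x) (log_grad g x)"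
  unfolding pbracket_def sign_form_def log_grad_def
  by (intro sum.cong refl) (simp add: pi_mat_def cmp_sign_def)

lemma pd_affine:
  assumes "\<And>t. f (x(i := t)) = A + C * t"
  shows "pd f i x = C"
proof -
  have "((\<lambda>t. A + C * t) has_real_derivative C) (at (x i))"
    by (auto intro!: derivative_eq_intros)
  then show ?thesis
    unfolding pd_def assms by (rule DERIV_imp_deriv)
qed

lemma log_grad_power_int:
  assumes "\<And>t. f (x(i := t)) = f x * (t / x i) powi e" and "x i \<noteq> 0"
  shows "log_grad f x i = of_int e * f x"
proof -
  have "((\<lambda>t. f x * (t / x i) powi e) has_real_derivative f x * (of_int e / x i)) (at (x i))"
    using assms(2) by (auto intro!: derivative_eq_intros)
  then have "pd f i x = f x * (of_int e / x i)"
    unfolding pd_def assms(1) by (rule DERIV_imp_deriv)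
  then show ?thesis
    using assms(2) by (simp add: log_grad_def)
qed

lemma prod_fun_upd_comp:
  fixes x :: "nat \<Rightarrow> real"
  assumes "finite S" "inj_on g S" "x i \<noteq> 0"
  shows "(\<Prod>j\<in>S. (x(i := t)) (g j)) = (if i \<in> g ` S then t / x i else 1) * (\<Prod>j\<in>S. x (g j))"
proof -
  have reindex: "(\<Prod>j\<in>S. y (g j)) = (\<Prod>k\<in>g ` S. y k)" for y :: "nat \<Rightarrow> real"
    using assms(2) by (simp add: prod.reindex)
  have "(\<Prod>k\<in>g ` S. (x(i := t)) k) = (if i \<in> g ` S then t / x i else 1) * (\<Prod>k\<in>g ` S. x k)"
  proof (cases "i \<in> g ` S")
    case True
    then show ?thesis
      using assms(1,3) by (simp add: prod.remove[of "g ` S" i])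
  next
    case False
    then show ?thesis
      by (auto intro!: prod.cong)
  qed
  then show ?thesis
    unfolding reindex[of "x(i := t)"] reindex[of x] .
qed

definition alt_ratio :: "nat \<Rightarrow> nat \<Rightarrow> (nat \<Rightarrow> real) \<Rightarrow> real" where
  "alt_ratio p q x = (\<Prod>j\<in>{p..q}. x (2 * j - 1)) / (\<Prod>j\<in>{p..q}. x (2 * j))"

lemma JJ_eq_alt_ratio: "JJ k = alt_ratio 1 k"
  by (simp add: fun_eq_iff JJ_def alt_ratio_def)

lemma alt_ratio_fun_upd:
  assumes "1 \<le> p" "x i \<noteq> 0"
  shows "alt_ratio p q (x(i := t))
    = alt_ratio p q x * (t / x i) powi (if 2 * p \<le> i + 1 \<and> i \<le> 2 * q then (-1) ^ (i + 1) else 0)"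
proof -
  have odd_image: "i \<in> (\<lambda>j. 2 * j - 1) ` {p..q} \<longleftrightarrow> odd i \<and> 2 * p \<le> i + 1 \<and> i \<le> 2 * q"
  proof
    assume "odd i \<and> 2 * p \<le> i + 1 \<and> i \<le> 2 * q"
    then show "i \<in> (\<lambda>j. 2 * j - 1) ` {p..q}"
      by (intro image_eqI[where x = "(i + 1) div 2"]) (auto elim!: oddE)
  qed (use assms(1) in auto)
  have even_image: "i \<in> (\<lambda>j. 2 * j) ` {p..q} \<longleftrightarrow> even i \<and> 2 * p \<le> i + 1 \<and> i \<le> 2 * q"
    by (auto elim!: evenE)
  have "inj_on (\<lambda>j. 2 * j - 1) {p..q}" "inj_on (\<lambda>j. 2 * j) {p..q}"
    using assms(1) by (auto simp: inj_on_def)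
  then show ?thesis
    unfolding alt_ratio_def
    using prod_fun_upd_comp[of "{p..q}" "\<lambda>j. 2 * j - 1" x i t] prod_fun_upd_comp[of "{p..q}" "\<lambda>j. 2 * j" x i t]
      assms(2) odd_image even_image
    by (auto simp: power_int_minus divide_inverse)
qed

lemma log_grad_alt_ratio:
  assumes "1 \<le> p" "p \<le> q + 1" "1 \<le> i" "x i \<noteq> 0"
  shows "log_grad (alt_ratio p q) x i = (alt_tail q i - alt_tail (p - 1) i) * alt_ratio p q x"
proof -
  have "log_grad (alt_ratio p q) x i
      = of_int (if 2 * p \<le> i + 1 \<and> i \<le> 2 * q then (-1) ^ (i + 1) else 0) * alt_ratio p q x"
    using assms by (intro log_grad_power_int alt_ratio_fun_upd)
  also have "of_int (if 2 * p \<le> i + 1 \<and> i \<le> 2 * q then (-1) ^ (i + 1) else 0)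
      = alt_tail q i - alt_tail (p - 1) i"
    using assms(1,2) by (auto simp: alt_tail_def)
  finally show ?thesis .
qed

lemma alt_ratio_nonzero:
  assumes "1 \<le> p" "2 * q \<le> n" "\<forall>i\<in>{1..n}. x i \<noteq> 0"
  shows "alt_ratio p q x \<noteq> 0"
proof -
  have "2 * j - 1 \<in> {1..n} \<and> 2 * j \<in> {1..n}" if "j \<in> {p..q}" for j
    using that assms(1,2) by auto
  then have "x (2 * j - 1) \<noteq> 0 \<and> x (2 * j) \<noteq> 0" if "j \<in> {p..q}" for j
    using that assms(3) by blast
  then show ?thesis
    by (simp add: alt_ratio_def)
qed

lemma log_grad_JJ:
  assumes "1 \<le> i" "x i \<noteq> 0"
  shows "log_grad (JJ k) x i = JJ k x * (alt_tail k i - alt_tail 0 i)"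
  using log_grad_alt_ratio[of 1 k i x] assms by (simp add: JJ_eq_alt_ratio mult.commute)

lemma vv_fun_upd: "vv a p (x(i := t)) = vv a p x + (if i \<in> {1..p} then a i * (t - x i) else 0)"
proof -
  have "vv a p (x(i := t)) = vv a p x + (\<Sum>j\<in>{1..p}. if j = i then a i * (t - x i) else 0)"
    unfolding vv_def sum.distrib[symmetric] by (intro sum.cong refl) (auto simp: algebra_simps)
  then show ?thesis by simp
qed

lemma FF_eq_vv_div_alt_ratio: "FF a n m x = vv a (2 * m) x / alt_ratio (m + 1) (n div 2) x"
  by (simp add: FF_def alt_ratio_def)

lemma log_grad_FF:
  assumes "even n" "i \<in> {1..n}" "x i \<noteq> 0"
  shows "log_grad (FF a n m) x i = F_vec a x m i / alt_ratio (m + 1) (n div 2) x"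
proof -
  define R where "R = alt_ratio (m + 1) (n div 2)"
  define e :: int where "e = (if 2 * (m + 1) \<le> i + 1 \<and> i \<le> 2 * (n div 2) then (-1) ^ (i + 1) else 0)"
  have R_upd: "R (x(i := t)) = R x * (t / x i) powi e" for t
    unfolding R_def e_def by (rule alt_ratio_fun_upd) (simp_all add: assms(3))
  have FF_eq: "FF a n m y = vv a (2 * m) y / R y" for y
    unfolding R_def by (rule FF_eq_vv_div_alt_ratio)
  show ?thesis
  proof (cases "i \<le> 2 * m")
    case True
    have "FF a n m (x(i := t)) = (vv a (2 * m) x - a i * x i) / R x + a i / R x * t" for t
      using True assms(2) by (simp add: FF_eq R_upd vv_fun_upd e_def add_divide_distrib diff_divide_distrib algebra_simps)
    then have "pd (FF a n m) i x = a i / R x"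
      by (rule pd_affine)
    then show ?thesis
      using True by (simp add: log_grad_def F_vec_def weights_def alt_tail_def R_def)
  next
    case False
    have "FF a n m (x(i := t)) = FF a n m x * (t / x i) powi (- e)" for t
      using False by (simp add: FF_eq R_upd vv_fun_upd power_int_minus divide_inverse)
    then have "log_grad (FF a n m) x i = of_int (- e) * FF a n m x"
      using assms(3) by (rule log_grad_power_int)
    then show ?thesis
      using False assms(1,2) by (auto simp: F_vec_def weights_def alt_tail_def e_def FF_eq R_def)
  qed
qed

section \<open>Involution and independence of the family\<close>

lemma ell_nonzero:
  assumes "\<exists>i\<in>{1..n}. a i \<noteq> 0"
  shows "a (ell a + 1) \<noteq> 0"
proof -
  from assms obtain i where "i \<in> {1..n}" "a i \<noteq> 0" by blast
  then have "a ((i - 1) + 1) \<noteq> 0" by simp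
  then show ?thesis
    unfolding ell_def by (rule LeastI)
qed

lemma ell_less:
  assumes "\<exists>i\<in>{1..n}. a i \<noteq> 0"
  shows "ell a < n"
proof -
  from assms obtain i where "i \<in> {1..n}" "a i \<noteq> 0" by blast
  then show ?thesis
    unfolding ell_def using Least_le[of "\<lambda>l. a (l + 1) \<noteq> 0" "i - 1"] by auto
qed

lemma ell_minimal: "i \<in> {1..ell a} \<Longrightarrow> a i = 0"
  using not_less_Least[of "i - 1" "\<lambda>l. a (l + 1) \<noteq> 0"] by (auto simp: ell_def)

text \<open>\<open>H = F_(n/2)\<close> is member \<open>\<lambda> + 1\<close> of the family, \<open>F_m\<close> (\<open>\<lambda> < m < n/2\<close>) is member \<open>m + 1\<close>.\<close>

definition F_position :: "nat \<Rightarrow> nat \<Rightarrow> nat \<Rightarrow> nat" where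
  "F_position l N m = (if m = N then l + 1 else m + 1)"

lemma bij_betw_F_position: "l < N \<Longrightarrow> bij_betw (F_position l N) {l + 1..N} {l + 1..N}"
  by (rule bij_betw_byWitness[where f' = "\<lambda>k. if k = l + 1 then N else k - 1"])
    (auto simp: F_position_def)

lemma fam_JJ: "k \<le> ell a div 2 \<Longrightarrow> fam a n k = JJ k"
  by (simp add: fam_def)

lemma fam_F_position:
  assumes "even n" "m \<in> {ell a div 2 + 1..n div 2}"
  shows "fam a n (F_position (ell a div 2) (n div 2) m) = FF a n m"
proof -
  have "HH a n = FF a n (n div 2)"
    using assms(1) by (simp add: fun_eq_iff HH_def FF_def)
  then show ?thesis
    using assms(2) by (auto simp: fam_def Let_def F_position_def)
qed

lemma ell_div_2_less: "even n \<Longrightarrow> \<exists>i\<in>{1..n}. a i \<noteq> 0 \<Longrightarrow> ell a div 2 < n div 2"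
  using ell_less[of n a] by auto

definition fam_vectors :: "(nat \<Rightarrow> real) \<Rightarrow> nat \<Rightarrow> (nat \<Rightarrow> real) \<Rightarrow> (nat \<Rightarrow> real) set" where
  "fam_vectors a n x = {(\<lambda>i. alt_tail k i - alt_tail 0 i) | k. k \<le> ell a div 2}
     \<union> {F_vec a x m | m. m \<in> {ell a div 2 + 1..n div 2}}"

lemma sign_form_fam_vectors:
  assumes "even n" "v \<in> fam_vectors a n x" "w \<in> fam_vectors a n x"
  shows "sign_form n v w = 0"
proof -
  let ?l = "ell a div 2" and ?N = "n div 2"
  have JF: "sign_form n (\<lambda>i. alt_tail k i - alt_tail 0 i) (F_vec a x m) = 0"
    if "k \<le> ?l" "m \<in> {?l + 1..?N}" for k m
    using that assms(1) by (intro sign_form_alt_head_F_vec) (auto intro: ell_minimal)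
  have FJ: "sign_form n (F_vec a x m) (\<lambda>i. alt_tail k i - alt_tail 0 i) = 0"
    if "k \<le> ?l" "m \<in> {?l + 1..?N}" for k m
    using JF[OF that] sign_form_swap[of n "F_vec a x m"] by simp
  have FF: "sign_form n (F_vec a x m) (F_vec a x m') = 0" if "m \<le> ?N" "m' \<le> ?N" for m m'
    using that assms(1) sign_form_F_vec[of n m m' a x] sign_form_F_vec[of n m' m a x]
      sign_form_swap[of n "F_vec a x m" "F_vec a x m'"]
    by (cases "m \<le> m'") auto
  show ?thesis
    using assms(2,3) unfolding fam_vectors_def Un_iff mem_Collect_eq
    by (elim disjE exE conjE) (simp_all add: JF FJ FF sign_form_alt_head_alt_head[OF assms(1)])
qed

lemma log_grad_fam:
  assumes "even n" "\<exists>i\<in>{1..n}. a i \<noteq> 0" "\<forall>i\<in>{1..n}. x i \<noteq> 0" "k \<in> {1..n div 2}"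
  shows "\<exists>c. \<exists>v\<in>fam_vectors a n x. \<forall>i\<in>{1..n}. log_grad (fam a n k) x i = c * v i"
proof (cases "k \<le> ell a div 2")
  case True
  then show ?thesis
    using assms(3) unfolding fam_vectors_def
    by (intro exI[of _ "JJ k x"] bexI[of _ "\<lambda>i. alt_tail k i - alt_tail 0 i"])
      (auto simp: fam_JJ log_grad_JJ)
next
  case False
  then have "k \<in> F_position (ell a div 2) (n div 2) ` {ell a div 2 + 1..n div 2}"
    using assms(4) bij_betw_imp_surj_on[OF bij_betw_F_position[OF ell_div_2_less[OF assms(1,2)]]]
    by auto
  then obtain m where "m \<in> {ell a div 2 + 1..n div 2}" "fam a n k = FF a n m"
    using fam_F_position[OF assms(1)] by auto
  then show ?thesis
    using assms(1,3) unfolding fam_vectors_def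
    by (intro exI[of _ "inverse (alt_ratio (m + 1) (n div 2) x)"] bexI[of _ "F_vec a x m"])
      (auto simp: log_grad_FF divide_inverse)
qed

lemma pbracket_fam_eq_0:
  assumes "even n" "\<exists>i\<in>{1..n}. a i \<noteq> 0" "\<forall>i\<in>{1..n}. x i \<noteq> 0"
    and "p \<in> {1..n div 2}" "q \<in> {1..n div 2}"
  shows "pbracket n (fam a n p) (fam a n q) x = 0"
proof -
  obtain c v where v: "v \<in> fam_vectors a n x" "\<forall>i\<in>{1..n}. log_grad (fam a n p) x i = c * v i"
    using log_grad_fam[OF assms(1-4)] by blast
  obtain d w where w: "w \<in> fam_vectors a n x" "\<forall>i\<in>{1..n}. log_grad (fam a n q) x i = d * w i"
    using log_grad_fam[OF assms(1-3,5)] by blast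
  have "pbracket n (fam a n p) (fam a n q) x = sign_form n (\<lambda>i. c * v i) (\<lambda>i. d * w i)"
    unfolding pbracket_eq_sign_form using v(2) w(2) by (intro sign_form_cong) auto
  also have "\<dots> = c * d * sign_form n v w"
    by (simp add: sign_form_scale_left sign_form_scale_right)
  finally show ?thesis
    using sign_form_fam_vectors[OF assms(1) v(1) w(1)] by simp
qed

lemma sum_log_grad_fam:
  assumes "even n" "\<exists>i\<in>{1..n}. a i \<noteq> 0" "\<forall>i\<in>{1..n}. x i \<noteq> 0" "i \<in> {1..n}"
  defines "l \<equiv> ell a div 2" and "N \<equiv> n div 2"
  shows "(\<Sum>k\<in>{1..N}. c k * log_grad (fam a n k) x i)
    = (\<Sum>k\<in>{1..l}. c k * JJ k x * (alt_tail k i - alt_tail 0 i))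
      + (\<Sum>m\<in>{l + 1..N}. c (F_position l N m) / alt_ratio (m + 1) N x * F_vec a x m i)"
proof -
  have "l < N"
    unfolding l_def N_def using assms(1,2) by (rule ell_div_2_less)
  then have "{1..N} = {1..l} \<union> {l + 1..N}"
    by auto
  then have "(\<Sum>k\<in>{1..N}. c k * log_grad (fam a n k) x i)
      = (\<Sum>k\<in>{1..l}. c k * log_grad (fam a n k) x i) + (\<Sum>k\<in>{l + 1..N}. c k * log_grad (fam a n k) x i)"
    by (simp add: sum.union_disjoint disjoint_iff)
  also have "(\<Sum>k\<in>{l + 1..N}. c k * log_grad (fam a n k) x i)
      = (\<Sum>m\<in>{l + 1..N}. c (F_position l N m) * log_grad (fam a n (F_position l N m)) x i)"
    using sum.reindex_bij_betw[OF bij_betw_F_position[OF \<open>l < N\<close>],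
        of "\<lambda>k. c k * log_grad (fam a n k) x i"]
    by simp
  finally show ?thesis
    using assms(1,3,4) by (simp add: l_def N_def fam_JJ log_grad_JJ fam_F_position log_grad_FF mult_ac)
qed

lemma sum_alt_head_even:
  assumes "r \<in> {1..l}"
  shows "(\<Sum>k\<in>{1..l}. z k * (alt_tail k (2 * r) - alt_tail 0 (2 * r))) = - (\<Sum>k\<in>{r..l}. z k)"
  using assms by (subst sum_negf[symmetric], intro sum.mono_neutral_cong_right) (auto simp: alt_tail_def)

lemma fam_independent:
  assumes "even n" "\<exists>i\<in>{1..n}. a i \<noteq> 0" "\<forall>i\<in>{1..n}. x i \<noteq> 0"
    and "\<forall>j\<in>{ell a<..n}. vv a j x \<noteq> 0"
    and "\<forall>i\<in>{1..n}. (\<Sum>k\<in>{1..n div 2}. c k * pd (fam a n k) i x) = 0"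
    and "k \<in> {1..n div 2}"
  shows "c k = 0"
proof -
  let ?l = "ell a div 2" and ?N = "n div 2"
  let ?P = "F_position ?l ?N" and ?R = "\<lambda>m. alt_ratio (m + 1) ?N x"
  have lN: "?l < ?N"
    using assms(1,2) by (rule ell_div_2_less)
  have comb: "(\<Sum>k\<in>{1..?l}. c k * JJ k x * (alt_tail k i - alt_tail 0 i))
      + (\<Sum>m\<in>{?l + 1..?N}. c (?P m) / ?R m * F_vec a x m i) = 0" if "i \<in> {1..n}" for i
  proof -
    have "(\<Sum>k\<in>{1..?N}. c k * log_grad (fam a n k) x i)
        = x i * (\<Sum>k\<in>{1..?N}. c k * pd (fam a n k) i x)"
      by (simp add: log_grad_def sum_distrib_left mult_ac)
    then show ?thesis
      using assms(5) that sum_log_grad_fam[OF assms(1-3) that, of c] by simp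
  qed
  have J: "c k = 0" if k: "k \<in> {1..?l}" for k
  proof -
    have "(\<Sum>k\<in>{r..?l}. c k * JJ k x) = 0" if r: "r \<in> {1..?l}" for r
    proof -
      have "a (2 * r) = 0"
        using r by (intro ell_minimal) auto
      then have "(\<Sum>m\<in>{?l + 1..?N}. c (?P m) / ?R m * F_vec a x m (2 * r)) = 0"
        using r by (intro sum.neutral) (auto simp: F_vec_def weights_def alt_tail_def)
      moreover have "2 * r \<in> {1..n}"
        using r lN by auto
      ultimately show ?thesis
        using comb[of "2 * r"] sum_alt_head_even[OF r, of "\<lambda>k. c k * JJ k x"] by (simp add: mult.assoc)
    qed
    then have "c k * JJ k x = 0"
      using k by (rule eq_0_if_tail_sums_eq_0)
    moreover have "JJ k x \<noteq> 0"
      unfolding JJ_eq_alt_ratio using k lN assms(3) by (intro alt_ratio_nonzero) auto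
    ultimately show ?thesis by simp
  qed
  have F: "c (?P m) = 0" if m: "m \<in> {?l + 1..?N}" for m
  proof -
    have "c (?P m) / ?R m = 0"
    proof (rule F_vec_independent[where e = "ell a" and y = "\<lambda>m. c (?P m) / ?R m"])
      show "ell a < n" "a (ell a + 1) \<noteq> 0"
        using ell_less[OF assms(2)] ell_nonzero[OF assms(2)] .
      then show "x (ell a + 1) \<noteq> 0"
        using assms(3) by simp
      show "(\<Sum>m\<in>{?l + 1..?N}. c (?P m) / ?R m * F_vec a x m i) = 0" if "i \<in> {1..n}" for i
        using comb[OF that] J by simp
    qed (use assms(1,4) m in auto)
    moreover have "?R m \<noteq> 0"
      using assms(1,3) by (intro alt_ratio_nonzero) auto
    ultimately show ?thesis by simp
  qed
  show ?thesis
  proof (cases "k \<le> ?l")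
    case True
    then show ?thesis using J assms(6) by simp
  next
    case False
    then have "k \<in> ?P ` {?l + 1..?N}"
      using assms(6) bij_betw_imp_surj_on[OF bij_betw_F_position[OF lN]] by auto
    then show ?thesis using F by auto
  qed
qed

section \<open>A dense open set of regular points\<close>

lemma in_closure_if_finite_exceptions:
  fixes \<gamma> :: "real \<Rightarrow> 'a::topological_space"
  assumes "continuous_on UNIV \<gamma>" "finite B" "\<And>t. t \<notin> B \<Longrightarrow> \<gamma> t \<in> U"
  shows "\<gamma> t \<in> closure U"
proof -
  have "closure (- B) = UNIV"
    using assms(2) by (simp add: closure_complement empty_interior_finite)
  moreover have "\<gamma> ` closure (- B) \<subseteq> closure U"
    using assms closure_subset
    by (intro image_closure_subset) (auto intro: continuous_on_subset)
  ultimately show ?thesis by auto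
qed

definition regular_points :: "(nat \<Rightarrow> real) \<Rightarrow> nat \<Rightarrow> (nat \<Rightarrow> real) set" where
  "regular_points a n = {x \<in> Rn n. (\<forall>i\<in>{1..n}. x i \<noteq> 0) \<and> (\<forall>j\<in>{ell a<..n}. vv a j x \<noteq> 0)}"

lemma openin_regular_points: "openin (top_of_set (Rn n)) (regular_points a n)"
proof -
  have "open {x :: nat \<Rightarrow> real. x i \<noteq> 0}" for i
    by (intro open_Collect_neq continuous_on_product_coordinates continuous_on_const)
  moreover have "open {x. vv a j x \<noteq> 0}" for j
    unfolding vv_def by (intro open_Collect_neq continuous_intros continuous_on_product_coordinates)
  ultimately have "open ((\<Inter>i\<in>{1..n}. {x. x i \<noteq> 0}) \<inter> (\<Inter>j\<in>{ell a<..n}. {x. vv a j x \<noteq> 0}))"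
    by (intro open_Int open_INT) auto
  moreover have "regular_points a n
      = Rn n \<inter> ((\<Inter>i\<in>{1..n}. {x. x i \<noteq> 0}) \<inter> (\<Inter>j\<in>{ell a<..n}. {x. vv a j x \<noteq> 0}))"
    by (auto simp: regular_points_def)
  ultimately show ?thesis
    unfolding openin_open by blast
qed

lemma Rn_subset_closure_regular_points:
  assumes "\<exists>i\<in>{1..n}. a i \<noteq> 0"
  shows "Rn n \<subseteq> closure (regular_points a n)"
proof
  fix y assume y: "y \<in> Rn n"
  define d where "d i = (if i \<in> {1..n} then if a i = 0 then 1 else a i else 0)" for i
  define s where "s j = (\<Sum>i\<in>{1..j}. a i * d i)" for j
  define \<gamma> where "\<gamma> t = (\<lambda>i. y i + t * d i)" for t
  have d_nonzero: "d i \<noteq> 0" if "i \<in> {1..n}" for i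
    using that by (simp add: d_def)
  have s_nonzero: "s j \<noteq> 0" if "j \<in> {ell a<..n}" for j
  proof -
    have "0 < s j"
      unfolding s_def
    proof (rule sum_pos2[where i = "ell a + 1"])
      show "0 < a (ell a + 1) * d (ell a + 1)"
        using ell_nonzero[OF assms] that by (auto simp: d_def zero_less_mult_iff)
    qed (use that in \<open>auto simp: d_def\<close>)
    then show ?thesis by simp
  qed
  have vv_\<gamma>: "vv a j (\<gamma> t) = vv a j y + t * s j" for j t
    by (simp add: vv_def \<gamma>_def s_def algebra_simps sum.distrib sum_distrib_left)
  let ?B = "(\<lambda>i. - y i / d i) ` {1..n} \<union> (\<lambda>j. - vv a j y / s j) ` {ell a<..n}"
  have "\<gamma> t \<in> regular_points a n" if "t \<notin> ?B" for t
  proof -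
    have "\<gamma> t i \<noteq> 0" if "i \<in> {1..n}" for i
    proof
      assume "\<gamma> t i = 0"
      then have "t = - y i / d i"
        using d_nonzero[OF that] by (simp add: \<gamma>_def field_simps)
      then show False
        using \<open>t \<notin> ?B\<close> that by blast
    qed
    moreover have "vv a j (\<gamma> t) \<noteq> 0" if "j \<in> {ell a<..n}" for j
    proof
      assume "vv a j (\<gamma> t) = 0"
      then have "t = - vv a j y / s j"
        using s_nonzero[OF that] by (simp add: vv_\<gamma> field_simps)
      then show False
        using \<open>t \<notin> ?B\<close> that by blast
    qed
    moreover have "\<gamma> t \<in> Rn n"
      using y by (simp add: Rn_def \<gamma>_def d_def)
    ultimately show ?thesis
      by (simp add: regular_points_def)
  qed
  moreover have "continuous_on UNIV \<gamma>"
    unfolding \<gamma>_def by (intro continuous_on_coordinatewise_then_product continuous_intros)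
  ultimately have "\<gamma> 0 \<in> closure (regular_points a n)"
    by (intro in_closure_if_finite_exceptions[where B = ?B]) auto
  then show "y \<in> closure (regular_points a n)"
    by (simp add: \<gamma>_def)
qed

theorem theorem2p3:
  fixes n :: nat and a :: "nat \<Rightarrow> real"
  assumes "n \<ge> 1" and "even n"
    and "\<exists>i\<in>{1..n}. a i \<noteq> 0"
  shows "(\<forall>x\<in>Rn n. (\<forall>i\<in>{1..n}. x i \<noteq> 0) \<longrightarrow>
            (\<forall>p\<in>{1..n div 2}. \<forall>q\<in>{1..n div 2}. pbracket n (fam a n p) (fam a n q) x = 0))
       \<and> (\<exists>U. openin (top_of_set (Rn n)) U \<and> Rn n \<subseteq> closure U
            \<and> U \<subseteq> {x. \<forall>i\<in>{1..n}. x i \<noteq> 0}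
            \<and> (\<forall>x\<in>U. \<forall>c :: nat \<Rightarrow> real.
                  (\<forall>i\<in>{1..n}. (\<Sum>k\<in>{1..n div 2}. c k * pd (fam a n k) i x) = 0)
                  \<longrightarrow> (\<forall>k\<in>{1..n div 2}. c k = 0)))"
  \<comment> \<open>\<open>n \<ge> 1\<close> is implied by the third hypothesis.\<close>
proof -
  have "\<forall>x\<in>Rn n. (\<forall>i\<in>{1..n}. x i \<noteq> 0) \<longrightarrow>
      (\<forall>p\<in>{1..n div 2}. \<forall>q\<in>{1..n div 2}. pbracket n (fam a n p) (fam a n q) x = 0)"
    using pbracket_fam_eq_0[OF assms(2,3)] by blast
  moreover have "openin (top_of_set (Rn n)) (regular_points a n)"
    by (rule openin_regular_points)
  moreover have "Rn n \<subseteq> closure (regular_points a n)"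
    using assms(3) by (rule Rn_subset_closure_regular_points)
  moreover have "regular_points a n \<subseteq> {x. \<forall>i\<in>{1..n}. x i \<noteq> 0}"
    by (auto simp: regular_points_def)
  moreover have "\<forall>x\<in>regular_points a n. \<forall>c :: nat \<Rightarrow> real.
      (\<forall>i\<in>{1..n}. (\<Sum>k\<in>{1..n div 2}. c k * pd (fam a n k) i x) = 0) \<longrightarrow> (\<forall>k\<in>{1..n div 2}. c k = 0)"
    using fam_independent[OF assms(2,3)] by (auto simp: regular_points_def)
  ultimately show ?thesis
    by blast
qed

end
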